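(* Let $N\ge1$, $B\in\mathbb{R}$, and for $i=1,\dots,N$ let $D_i>0$, $b_i>0$, $a_i\in\mathbb{R}$. For $\lambda\in(0,\infty)$ define $$q_i(\lambda):=\frac{W\big(\exp(a_i+\frac{b_i}{\lambda}-1)\big)}{W\big(\exp(a_i+\frac{b_i}{\lambda}-1)\big)+1},$$ let $c_i(q):=-\dfrac{a_i}{b_i}-\dfrac{1}{b_i}\big[\ln(1-q)-\ln q\big]$ for $q\in(0,1)$, and define $$f(\lambda):=\sum_{i=1}^N D_i q_i(\lambda),\qquad g(\lambda):=\sum_{i=1}^N D_i q_i(\lambda)\,c_i(q_i(\lambda))-B.$$ Then $f$ and $g$ are strictly decreasing on $(0,\infty)$, and $\lim_{\lambda\to0^+}g(\lambda)>0$.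
   Context: $W$ denotes the Lambert $W$ function on $(0,\infty)$: the inverse of $x\mapsto xe^x$ on $(0,\infty)$. Note $q_i(\lambda)\in(0,1)$. Here $f$ is total sales and $g$ the exceeded budget as functions of the dual variable $\lambda$. *)

theory Defs
  imports "HOL-Analysis.Analysis"
begin

definition lambertW :: "real \<Rightarrow> real" where
  "lambertW y = (THE x. 0 < x \<and> x * exp x = y)"

definition qfun :: "real \<Rightarrow> real \<Rightarrow> real \<Rightarrow> real" where
  "qfun a b lam = lambertW (exp (a + b / lam - 1)) / (lambertW (exp (a + b / lam - 1)) + 1)"

definition cfun :: "real \<Rightarrow> real \<Rightarrow> real \<Rightarrow> real" where
  "cfun a b q = - a / b - (1 / b) * (ln (1 - q) - ln q)"

definition sales :: "nat \<Rightarrow> (nat \<Rightarrow> real) \<Rightarrow> (nat \<Rightarrow> real) \<Rightarrow> (nat \<Rightarrow> real) \<Rightarrow> real \<Rightarrow> real" where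
  "sales N D a b lam = (\<Sum>i=1..N. D i * qfun (a i) (b i) lam)"

definition exceeded_budget :: "nat \<Rightarrow> (nat \<Rightarrow> real) \<Rightarrow> (nat \<Rightarrow> real) \<Rightarrow> (nat \<Rightarrow> real) \<Rightarrow> real \<Rightarrow> real \<Rightarrow> real" where
  "exceeded_budget N D a b B lam =
     (\<Sum>i=1..N. D i * qfun (a i) (b i) lam * cfun (a i) (b i) (qfun (a i) (b i) lam)) - B"

end

theory Submission
  imports Defs "HOL-Real_Asymp.Real_Asymp"
begin

text \<open>Write \<open>w = W(exp(a + b/\<lambda> - 1))\<close>, so that \<open>w + ln w = a + b/\<lambda> - 1\<close>. Then \<open>q = w/(w+1)\<close> and
  \<open>ln(1-q) - ln q = -ln w\<close>, hence \<open>q c(q) = h(w)/b\<close> with \<open>h(w) = w(ln w - a)/(w+1)\<close>.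
  As \<open>\<lambda>\<close> increases, \<open>w\<close> strictly decreases, and so do \<open>q\<close> and \<open>h(w)\<close>: indeed
  \<open>h'(w) = (w + ln w - a + 1)/(w+1)\<^sup>2\<close>, which is positive on the relevant range because
  \<open>w + ln w - a + 1 = b/\<lambda> > 0\<close>. As \<open>\<lambda> \<rightarrow> 0\<^sup>+\<close>, \<open>w \<rightarrow> \<infinity>\<close> and \<open>h(w) \<rightarrow> \<infinity>\<close>, so \<open>g\<close> tends to \<open>+\<infinity>\<close>.\<close>

lemma strict_mono_on_x_exp: "strict_mono_on {0..} (\<lambda>x::real. x * exp x)"
  by (rule strict_mono_onI) (auto intro: mult_strict_mono)

lemma ex1_x_exp_eq:
  fixes y :: real
  assumes "y > 0"
  shows "\<exists>!x. 0 < x \<and> x * exp x = y"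
proof -
  have "continuous_on {0..y} (\<lambda>x. x * exp x)"
    by (intro continuous_intros)
  moreover have "y \<le> y * exp y"
    using assms by simp
  ultimately obtain x where x: "0 \<le> x" "x * exp x = y"
    using IVT'[of "\<lambda>x. x * exp x" 0 y y] assms by auto
  from x assms have "x \<noteq> 0"
    by auto
  with x(1) have "0 < x"
    by simp
  moreover have "z = x" if "0 < z" "z * exp z = y" for z
    by (rule strict_mono_on_eqD[OF strict_mono_on_x_exp]) (use that x in auto)
  ultimately show ?thesis
    using x(2) by blast
qed

lemma lambertW_characterization:
  assumes "y > 0"
  shows "lambertW y > 0" "lambertW y * exp (lambertW y) = y"
  using theI'[OF ex1_x_exp_eq[OF assms]] unfolding lambertW_def by auto

lemma lambertW_exp:
  shows "lambertW (exp t) > 0" and "lambertW (exp t) + ln (lambertW (exp t)) = t"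
proof -
  define w where "w = lambertW (exp t)"
  have w: "w > 0" "w * exp w = exp t"
    using lambertW_characterization[of "exp t"] unfolding w_def by auto
  have "ln w + w = ln (w * exp w)"
    using w(1) by (simp add: ln_mult)
  with w show "lambertW (exp t) > 0" "lambertW (exp t) + ln (lambertW (exp t)) = t"
    unfolding w_def[symmetric] by simp_all
qed

lemma strict_mono_lambertW_exp: "strict_mono (\<lambda>t. lambertW (exp t))"
proof (rule strict_monoI, rule ccontr)
  fix s t :: real
  assume "s < t" "\<not> lambertW (exp s) < lambertW (exp t)"
  moreover from this have "ln (lambertW (exp t)) \<le> ln (lambertW (exp s))"
    using lambertW_exp(1)[of t] by simp
  ultimately show False
    using lambertW_exp(2)[of s] lambertW_exp(2)[of t] by linarith
qed

lemma lambertW_exp_lower_bound: "(t + 1) / 2 \<le> lambertW (exp t)"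
proof -
  have "t + 1 \<le> 2 * lambertW (exp t)"
    using ln_le_minus_one[OF lambertW_exp(1)[of t]] lambertW_exp(2)[of t] by linarith
  then show ?thesis
    by simp
qed

lemma filterlim_lambertW_exp_at_top: "filterlim (\<lambda>t. lambertW (exp t)) at_top at_top"
proof (rule filterlim_at_top_mono)
  show "filterlim (\<lambda>t::real. (t + 1) / 2) at_top at_top"
    by real_asymp
  show "\<forall>\<^sub>F t in at_top. (t + 1) / 2 \<le> lambertW (exp t)"
    by (intro always_eventually allI lambertW_exp_lower_bound)
qed

definition wfun :: "real \<Rightarrow> real \<Rightarrow> real \<Rightarrow> real" where
  "wfun a b lam = lambertW (exp (a + b / lam - 1))"

lemma wfun_pos: "wfun a b lam > 0"
  unfolding wfun_def by (rule lambertW_exp)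

lemma wfun_add_ln: "wfun a b lam + ln (wfun a b lam) = a + b / lam - 1"
  unfolding wfun_def by (rule lambertW_exp)

lemma strict_antimono_on_wfun:
  assumes "b > 0"
  shows "strict_antimono_on {0<..} (wfun a b)"
proof (rule monotone_onI)
  fix l1 l2 :: real
  assume "l1 \<in> {0<..}" "l2 \<in> {0<..}" "l1 < l2"
  with assms have "a + b / l2 - 1 < a + b / l1 - 1"
    by (simp add: divide_strict_left_mono)
  then show "wfun a b l2 < wfun a b l1"
    unfolding wfun_def using strict_monoD[OF strict_mono_lambertW_exp] by blast
qed

lemma filterlim_wfun_at_right_0:
  assumes "b > 0"
  shows "filterlim (wfun a b) at_top (at_right 0)"
proof -
  have "filterlim (\<lambda>lam. a + b / lam - 1) at_top (at_right 0)"
    using assms by real_asymp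
  then show ?thesis
    unfolding wfun_def by (rule filterlim_compose[OF filterlim_lambertW_exp_at_top])
qed

lemma qfun_eq: "qfun a b lam = wfun a b lam / (wfun a b lam + 1)"
  unfolding qfun_def wfun_def ..

definition hfun :: "real \<Rightarrow> real \<Rightarrow> real" where
  "hfun a w = w * (ln w - a) / (w + 1)"

lemma qfun_cfun_eq:
  assumes "b > 0"
  shows "qfun a b lam * cfun a b (qfun a b lam) = hfun a (wfun a b lam) / b"
proof -
  define w where "w = wfun a b lam"
  have w: "w > 0"
    unfolding w_def by (rule wfun_pos)
  then have "1 - w / (w + 1) = 1 / (w + 1)"
    by (simp add: field_simps)
  with w have "ln (1 - w / (w + 1)) - ln (w / (w + 1)) = - ln w"
    by (simp add: ln_div)
  then have "qfun a b lam * cfun a b (qfun a b lam) = w / (w + 1) * (- a / b + ln w / b)"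
    unfolding qfun_eq cfun_def w_def[symmetric] by simp
  also have "\<dots> = hfun a w / b"
    unfolding hfun_def using w assms by (simp add: field_simps)
  finally show ?thesis
    unfolding w_def .
qed

lemma hfun_has_derivative:
  assumes "w > 0"
  shows "(hfun a has_real_derivative (w + ln w - a + 1) / (w + 1)\<^sup>2) (at w)"
proof -
  have "(hfun a has_real_derivative
          ((ln w - a + w * (1 / w)) * (w + 1) - w * (ln w - a)) / ((w + 1) * (w + 1))) (at w)"
    unfolding hfun_def using assms by (auto intro!: derivative_eq_intros)
  then show ?thesis
    using assms by (simp add: power2_eq_square algebra_simps)
qed

lemma hfun_strict_mono:
  assumes "0 < u" "u < v" "u + ln u > a - 1"
  shows "hfun a u < hfun a v"
proof (rule DERIV_pos_imp_increasing[OF assms(2)])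
  fix x
  assume x: "u \<le> x" "x \<le> v"
  with assms have "x > 0" "ln u \<le> ln x"
    by auto
  with x assms have "x + ln x - a + 1 > 0"
    by linarith
  with \<open>x > 0\<close> have "(x + ln x - a + 1) / (x + 1)\<^sup>2 > 0"
    by simp
  with hfun_has_derivative[OF \<open>x > 0\<close>]
  show "\<exists>y. (hfun a has_real_derivative y) (at x) \<and> y > 0"
    by blast
qed

lemma strict_antimono_on_qfun:
  assumes "b > 0"
  shows "strict_antimono_on {0<..} (qfun a b)"
proof (rule monotone_onI)
  fix l1 l2 :: real
  assume "l1 \<in> {0<..}" "l2 \<in> {0<..}" "l1 < l2"
  with assms have "wfun a b l2 < wfun a b l1"
    using strict_antimono_on_wfun by (auto simp: monotone_on_def)
  then show "qfun a b l2 < qfun a b l1"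
    unfolding qfun_eq using wfun_pos[of a b l1] wfun_pos[of a b l2] by (simp add: field_simps)
qed

lemma strict_antimono_on_qfun_cfun:
  assumes "b > 0"
  shows "strict_antimono_on {0<..} (\<lambda>lam. qfun a b lam * cfun a b (qfun a b lam))"
proof (rule monotone_onI)
  fix l1 l2 :: real
  assume l: "l1 \<in> {0<..}" "l2 \<in> {0<..}" "l1 < l2"
  with assms have "wfun a b l2 < wfun a b l1"
    using strict_antimono_on_wfun by (auto simp: monotone_on_def)
  moreover have "wfun a b l2 + ln (wfun a b l2) > a - 1"
    using wfun_add_ln[of a b l2] assms l by simp
  ultimately have "hfun a (wfun a b l2) < hfun a (wfun a b l1)"
    by (intro hfun_strict_mono wfun_pos)
  with assms show "qfun a b l2 * cfun a b (qfun a b l2) < qfun a b l1 * cfun a b (qfun a b l1)"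
    by (simp add: qfun_cfun_eq divide_strict_right_mono)
qed

lemma filterlim_qfun_cfun_at_right_0:
  assumes "b > 0"
  shows "filterlim (\<lambda>lam. qfun a b lam * cfun a b (qfun a b lam)) at_top (at_right 0)"
proof -
  have "filterlim (hfun a) at_top at_top"
    unfolding hfun_def by real_asymp
  then have "filterlim (\<lambda>lam. inverse b * hfun a (wfun a b lam)) at_top (at_right 0)"
    using assms by (intro filterlim_tendsto_pos_mult_at_top[OF tendsto_const]
        filterlim_compose[OF _ filterlim_wfun_at_right_0]) auto
  with assms show ?thesis
    by (simp add: qfun_cfun_eq field_simps)
qed

lemma strict_antimono_on_sum_pos_weights:
  fixes f :: "'i \<Rightarrow> 'a::linorder \<Rightarrow> real"
  assumes "finite I" "I \<noteq> {}" "\<And>i. i \<in> I \<Longrightarrow> c i > 0"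
    and "\<And>i. i \<in> I \<Longrightarrow> strict_antimono_on S (f i)"
  shows "strict_antimono_on S (\<lambda>x. \<Sum>i\<in>I. c i * f i x)"
proof (rule monotone_onI)
  fix x y
  assume "x \<in> S" "y \<in> S" "x < y"
  with assms(4) have "f i y < f i x" if "i \<in> I" for i
    using that by (auto simp: monotone_on_def)
  with assms(3) show "(\<Sum>i\<in>I. c i * f i y) < (\<Sum>i\<in>I. c i * f i x)"
    by (intro sum_strict_mono[OF assms(1,2)]) simp
qed

lemma filterlim_sum_pos_weights_at_top:
  fixes f :: "'i \<Rightarrow> 'a \<Rightarrow> real"
  assumes "finite I" "I \<noteq> {}" "\<And>i. i \<in> I \<Longrightarrow> c i > 0"
    and "\<And>i. i \<in> I \<Longrightarrow> filterlim (f i) at_top F"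
  shows "filterlim (\<lambda>x. \<Sum>i\<in>I. c i * f i x) at_top F"
  using assms(1,2,3,4)
proof (induction I rule: finite_ne_induct)
  case (singleton i)
  then show ?case
    by (simp add: filterlim_tendsto_pos_mult_at_top[OF tendsto_const])
next
  case (insert i I)
  then show ?case
    by (simp add: filterlim_at_top_add_at_top filterlim_tendsto_pos_mult_at_top[OF tendsto_const])
qed

theorem theorem4:
  fixes N :: nat and B :: real and D a b :: "nat \<Rightarrow> real"
  assumes "N \<ge> 1"
    and "\<And>i. i \<in> {1..N} \<Longrightarrow> D i > 0"
    and "\<And>i. i \<in> {1..N} \<Longrightarrow> b i > 0"
  shows "strict_antimono_on {0<..} (sales N D a b) \<and>
         strict_antimono_on {0<..} (exceeded_budget N D a b B) \<and>
         (\<exists>L::ereal. L > 0 \<and>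
           ((\<lambda>lam. ereal (exceeded_budget N D a b B lam)) \<longlongrightarrow> L) (at_right 0))"
proof -
  let ?spend = "\<lambda>lam. \<Sum>i=1..N. D i * (qfun (a i) (b i) lam * cfun (a i) (b i) (qfun (a i) (b i) lam))"
  have budget_eq: "exceeded_budget N D a b B = (\<lambda>lam. ?spend lam - B)"
    unfolding exceeded_budget_def by (simp add: mult.assoc)
  have ne: "{1..N} \<noteq> {}"
    using assms(1) by simp
  have "strict_antimono_on {0<..} (sales N D a b)"
    unfolding sales_def using assms(2,3) ne
    by (intro strict_antimono_on_sum_pos_weights strict_antimono_on_qfun) auto
  moreover have "strict_antimono_on {0<..} ?spend"
    using assms(2,3) ne
    by (intro strict_antimono_on_sum_pos_weights strict_antimono_on_qfun_cfun) auto
  then have "strict_antimono_on {0<..} (exceeded_budget N D a b B)"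
    unfolding budget_eq by (auto simp: monotone_on_def)
  moreover have "filterlim ?spend at_top (at_right 0)"
    using assms(2,3) ne
    by (intro filterlim_sum_pos_weights_at_top filterlim_qfun_cfun_at_right_0) auto
  then have "filterlim (exceeded_budget N D a b B) at_top (at_right 0)"
    unfolding budget_eq using filterlim_tendsto_add_at_top[OF tendsto_const[of "-B"]] by simp
  then have "((\<lambda>lam. ereal (exceeded_budget N D a b B lam)) \<longlongrightarrow> \<infinity>) (at_right 0)"
    by (simp add: tendsto_PInfty_eq_at_top)
  ultimately show ?thesis
    by (intro conjI exI[of _ \<infinity>]) auto
qed

end
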